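(* Let $k\ge1$, $r>0$, $n\ge1$, $x_j=j/n$. For any $0<\delta<1$, any $S\in W_r^k$ and any function (estimate) $\hat S_n$ defined at the points $x_1,\dots,x_n$, $$\|\hat S_n-S\|_n^2\ge(1-\delta)\|T_n(\hat S)-S\|^2-(\delta^{-1}-1)\,r/n^2,$$ where $T_n(\hat S)(x)=\sum_{k=1}^n\hat S_n(x_k)\mathbf 1_{(x_{k-1},x_k]}(x)$.
   Context: $\|f\|_n^2=\frac1n\sum_{j=1}^nf^2(x_j)$; $\|f\|^2=\int_0^1f^2(t)dt$; $x_0=0$. $W_r^k$: set of 1-periodic $k$ times differentiable $f:\mathbb R\to\mathbb R$ with $\sum_{j=0}^k\|f^{(j)}\|^2\le r$. *)

theory Defs
  imports "HOL-Analysis.Analysis"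
begin

definition emp_norm2 :: "nat \<Rightarrow> (real \<Rightarrow> real) \<Rightarrow> real" where
  "emp_norm2 n f = (1 / real n) * (\<Sum>j=1..n. (f (real j / real n))^2)"

definition L2_norm2 :: "(real \<Rightarrow> real) \<Rightarrow> real" where
  "L2_norm2 f = integral {0..1} (\<lambda>t. (f t)^2)"

definition k_times_differentiable :: "nat \<Rightarrow> (real \<Rightarrow> real) \<Rightarrow> bool" where
  "k_times_differentiable k f \<longleftrightarrow> (\<forall>j<k. \<forall>x. (deriv ^^ j) f differentiable (at x))"

definition W :: "real \<Rightarrow> nat \<Rightarrow> (real \<Rightarrow> real) set" where
  "W r k = {f. (\<forall>x. f (x + 1) = f x) \<and> k_times_differentiable k f \<and>
              (\<forall>j\<le>k. (\<lambda>t. ((deriv ^^ j) f t)^2) integrable_on {0..1}) \<and>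
              (\<Sum>j=0..k. L2_norm2 ((deriv ^^ j) f)) \<le> r}"

definition T_n :: "nat \<Rightarrow> (real \<Rightarrow> real) \<Rightarrow> real \<Rightarrow> real" where
  "T_n n Sh x = (\<Sum>j=1..n. Sh (real j / real n) *
                    indicator {real (j - 1) / real n <.. real j / real n} x)"

end

theory Submission
  imports Defs
begin

text \<open>On the cell (x_{j-1}, x_j] the step function T_n(Sh) is the constant Sh(x_j), so there
  T_n(Sh) - S = (Sh(x_j) - S(x_j)) + (S(x_j) - S(t)). Young's inequality
  (1 - \<delta>)(a + b)^2 \<le> a^2 + (1/\<delta> - 1) b^2 separates the two terms. The first integrates to
  1/n times the squared empirical error at x_j; for the second, the fundamental theorem of
  calculus and Cauchy-Schwarz give (S(x_j) - S(t))^2 \<le> (1/n) \<integral>_cell S'^2. Summed over the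
  n cells, the error terms add up to (1/\<delta> - 1) \<parallel>S'\<parallel>^2 / n^2 \<le> (1/\<delta> - 1) r / n^2.\<close>

lemma power2_sum_le_weighted:
  fixes a b d :: real
  assumes "0 < d" "d < 1"
  shows "(1 - d) * (a + b)^2 \<le> a^2 + (1/d - 1) * b^2"
proof -
  have "d * (a^2 + (1/d - 1) * b^2) - d * ((1 - d) * (a + b)^2) = (d * a - (1 - d) * b)^2"
    using assms by (simp add: field_simps power2_eq_square)
  then have "d * ((1 - d) * (a + b)^2) \<le> d * (a^2 + (1/d - 1) * b^2)"
    by (metis diff_ge_0_iff_ge zero_le_power2)
  then show ?thesis
    using assms by simp
qed

lemma square_of_integral_le:
  fixes f :: "real \<Rightarrow> real"
  assumes "a \<le> b" and I: "(f has_integral I) {a..b}"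
    and J: "((\<lambda>t. (f t)^2) has_integral J) {a..b}"
  shows "I^2 \<le> (b - a) * J"
proof (cases "a = b")
  case True
  then have "I = 0"
    using I has_integral_unique has_integral_refl(2) by (metis atLeastAtMost_singleton)
  then show ?thesis
    using True by simp
next
  case False
  define L where "L = b - a"
  have "L > 0"
    using assms False by (simp add: L_def)
  define c where "c = I / L"
  have "((\<lambda>t. (f t)^2 - 2 * c * f t + c^2) has_integral (J - 2 * c * I + L * c^2)) {a..b}"
    using has_integral_add[OF has_integral_diff[OF J has_integral_cmul[OF I, of "2 * c"]]
        has_integral_const_real[of "c^2" a b]] \<open>a \<le> b\<close>
    by (simp add: L_def)
  moreover have "(\<lambda>t. (f t)^2 - 2 * c * f t + c^2) = (\<lambda>t. (f t - c)^2)"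
    by (simp add: power2_eq_square algebra_simps)
  ultimately have "0 \<le> J - 2 * c * I + L * c^2"
    by (metis has_integral_nonneg zero_le_power2)
  also have "\<dots> = J - I^2 / L"
    using \<open>L > 0\<close> by (simp add: c_def power2_eq_square)
  finally show ?thesis
    using \<open>L > 0\<close> by (simp add: L_def field_simps)
qed

lemma increment_square_le:
  fixes S f :: "real \<Rightarrow> real"
  assumes "t \<le> y"
    and S': "\<And>s. s \<in> {t..y} \<Longrightarrow> (S has_real_derivative f s) (at s within {t..y})"
    and "(\<lambda>s. (f s)^2) integrable_on {t..y}"
  shows "(S y - S t)^2 \<le> (y - t) * integral {t..y} (\<lambda>s. (f s)^2)"
proof (rule square_of_integral_le)
  show "(f has_integral S y - S t) {t..y}"
    using \<open>t \<le> y\<close> S' by (intro fundamental_theorem_of_calculus)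
      (auto simp: has_real_derivative_iff_has_vector_derivative)
qed (use assms in auto)

lemma integral_cell_le:
  fixes S f :: "real \<Rightarrow> real"
  assumes "u \<le> v" and "0 < \<delta>" "\<delta> < 1"
    and S': "\<And>s. s \<in> {u..v} \<Longrightarrow> (S has_real_derivative f s) (at s within {u..v})"
    and f2: "(\<lambda>s. (f s)^2) integrable_on {u..v}"
  shows "(1 - \<delta>) * integral {u..v} (\<lambda>t. (w - S t)^2)
    \<le> (v - u) * (w - S v)^2 + (1/\<delta> - 1) * (v - u)^2 * integral {u..v} (\<lambda>s. (f s)^2)"
proof -
  define C where "C = integral {u..v} (\<lambda>s. (f s)^2)"
  have increment: "(S v - S t)^2 \<le> (v - u) * C" if t: "t \<in> {u..v}" for t
  proof -
    have f2_tv: "(\<lambda>s. (f s)^2) integrable_on {t..v}"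
      using t by (intro integrable_on_subinterval[OF f2]) auto
    have "(S v - S t)^2 \<le> (v - t) * integral {t..v} (\<lambda>s. (f s)^2)"
      using t f2_tv by (intro increment_square_le) (auto intro!: has_field_derivative_subset[OF S'])
    also have "\<dots> \<le> (v - u) * C"
      unfolding C_def using t f2 f2_tv
      by (intro mult_mono integral_subset_le integral_nonneg) auto
    finally show ?thesis .
  qed
  have pointwise: "(1 - \<delta>) * (w - S t)^2 \<le> (w - S v)^2 + (1/\<delta> - 1) * ((v - u) * C)"
    if "t \<in> {u..v}" for t
  proof -
    have "(1 - \<delta>) * (w - S t)^2 \<le> (w - S v)^2 + (1/\<delta> - 1) * (S v - S t)^2"
      using power2_sum_le_weighted[OF \<open>0 < \<delta>\<close> \<open>\<delta> < 1\<close>, of "w - S v" "S v - S t"] by simp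
    also have "\<dots> \<le> (w - S v)^2 + (1/\<delta> - 1) * ((v - u) * C)"
      using increment[OF that] \<open>0 < \<delta>\<close> \<open>\<delta> < 1\<close> by (intro add_left_mono mult_left_mono) auto
    finally show ?thesis .
  qed
  have "continuous_on {u..v} S"
    using S' by (rule DERIV_continuous_on)
  then have "(\<lambda>t. (1 - \<delta>) * (w - S t)^2) integrable_on {u..v}"
    by (intro integrable_continuous_interval continuous_intros)
  then have "integral {u..v} (\<lambda>t. (1 - \<delta>) * (w - S t)^2)
      \<le> integral {u..v} (\<lambda>t. (w - S v)^2 + (1/\<delta> - 1) * ((v - u) * C))"
    using pointwise by (intro integral_le) auto
  then have "(1 - \<delta>) * integral {u..v} (\<lambda>t. (w - S t)^2)
      \<le> (v - u) * ((w - S v)^2 + (1/\<delta> - 1) * ((v - u) * C))"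
    using \<open>u \<le> v\<close> by simp
  also have "\<dots> = (v - u) * (w - S v)^2 + (1/\<delta> - 1) * (v - u)^2 * C"
    by algebra
  finally show ?thesis
    by (simp only: C_def)
qed

lemma has_integral_sum_cells:
  fixes h :: "real \<Rightarrow> real" and x :: "nat \<Rightarrow> real"
  assumes "\<And>j. j \<in> {1..m} \<Longrightarrow> x (j - 1) \<le> x j"
    and "\<And>j. j \<in> {1..m} \<Longrightarrow> (h has_integral c j) {x (j - 1)..x j}"
  shows "(h has_integral (\<Sum>j=1..m. c j)) {x 0..x m}"
  using assms
proof (induction m)
  case 0
  show ?case
    using has_integral_refl(2)[of h "x 0"] by simp
next
  case (Suc m)
  note step = Suc.prems(1)
  have "x 0 \<le> x i" if "i \<le> m" for i
    using that
  proof (induction i)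
    case (Suc i)
    then show ?case
      using step[of "Suc i"] by simp
  qed simp
  moreover have "x m \<le> x (Suc m)"
    using step[of "Suc m"] by simp
  moreover have "(h has_integral (\<Sum>j=1..m. c j)) {x 0..x m}"
    using Suc by simp
  moreover have "(h has_integral c (Suc m)) {x m..x (Suc m)}"
    using Suc.prems(2)[of "Suc m"] by simp
  ultimately have "(h has_integral (\<Sum>j=1..m. c j) + c (Suc m)) {x 0..x (Suc m)}"
    by (intro has_integral_combine) auto
  then show ?case
    by simp
qed

lemma grid_cell:
  assumes "j \<in> {1..n}"
  shows "real (j - 1) / real n \<le> real j / real n"
    and "{real (j - 1) / real n..real j / real n} \<subseteq> {0..1}"
    and "real j / real n - real (j - 1) / real n = 1 / real n"
  using assms by (auto simp: field_simps)

lemma integral_sum_grid_cells: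
  fixes h :: "real \<Rightarrow> real"
  assumes "n \<ge> 1" and "h integrable_on {0..1}"
  shows "integral {0..1} h = (\<Sum>j=1..n. integral {real (j - 1) / real n..real j / real n} h)"
proof -
  have "(h has_integral (\<Sum>j=1..n. integral {real (j - 1) / real n..real j / real n} h))
      {real 0 / real n..real n / real n}"
    using grid_cell(1,2)
    by (intro has_integral_sum_cells integrable_integral integrable_on_subinterval[OF assms(2)])
  then show ?thesis
    using assms(1) by (simp add: integral_unique)
qed

lemma T_n_eq_on_cell:
  assumes j: "j \<in> {1..n}" and t: "t \<in> {real (j - 1) / real n <.. real j / real n}"
  shows "T_n n Sh t = Sh (real j / real n)"
proof -
  have "t \<notin> {real (i - 1) / real n <.. real i / real n}" if "i \<in> {1..n}" "i \<noteq> j" for i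
  proof -
    have "real i \<le> real (j - 1) \<or> real j \<le> real (i - 1)"
      using that by linarith
    then have "real i / real n \<le> real (j - 1) / real n \<or> real j / real n \<le> real (i - 1) / real n"
      by (meson divide_right_mono of_nat_0_le_iff)
    then show ?thesis
      using t by fastforce
  qed
  then have "T_n n Sh t = (\<Sum>i=1..n. if i = j then Sh (real i / real n) else 0)"
    unfolding T_n_def using t by (intro sum.cong) auto
  then show ?thesis
    using j by simp
qed

lemma L2_norm2_T_n_diff:
  fixes S Sh :: "real \<Rightarrow> real"
  assumes "n \<ge> 1" and "continuous_on {0..1} S"
  shows "L2_norm2 (\<lambda>x. T_n n Sh x - S x)
    = (\<Sum>j=1..n. integral {real (j - 1) / real n..real j / real n}
                     (\<lambda>t. (Sh (real j / real n) - S t)^2))"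
proof -
  let ?x = "\<lambda>j. real j / real n"
  have cell: "((\<lambda>t. (T_n n Sh t - S t)^2) has_integral
      integral {?x (j - 1)..?x j} (\<lambda>t. (Sh (?x j) - S t)^2)) {?x (j - 1)..?x j}"
    if j: "j \<in> {1..n}" for j
  proof (rule has_integral_spike_finite[of "{?x (j - 1)}"])
    have "continuous_on {?x (j - 1)..?x j} S"
      using assms(2) grid_cell(2)[OF j] by (rule continuous_on_subset)
    then show "((\<lambda>t. (Sh (?x j) - S t)^2) has_integral
        integral {?x (j - 1)..?x j} (\<lambda>t. (Sh (?x j) - S t)^2)) {?x (j - 1)..?x j}"
      by (intro integrable_integral integrable_continuous_interval continuous_intros)
  qed (use T_n_eq_on_cell[OF that] in auto)
  have "((\<lambda>t. (T_n n Sh t - S t)^2) has_integral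
      (\<Sum>j=1..n. integral {?x (j - 1)..?x j} (\<lambda>t. (Sh (?x j) - S t)^2))) {?x 0..?x n}"
    using cell grid_cell(1) by (intro has_integral_sum_cells)
  then show ?thesis
    using assms(1) by (simp add: L2_norm2_def integral_unique)
qed

lemma W_first_derivative:
  assumes "S \<in> W r k" and "k \<ge> 1"
  shows "\<And>y. (S has_real_derivative deriv S y) (at y)"
    and "(\<lambda>t. (deriv S t)^2) integrable_on {0..1}"
    and "L2_norm2 (deriv S) \<le> r"
proof -
  have "\<forall>x. (deriv ^^ 0) S differentiable (at x)"
    using assms unfolding W_def k_times_differentiable_def by auto
  then show "\<And>y. (S has_real_derivative deriv S y) (at y)"
    by (simp add: DERIV_deriv_iff_real_differentiable)
  have integrable: "\<forall>j\<le>k. (\<lambda>t. ((deriv ^^ j) S t)^2) integrable_on {0..1}"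
    using assms unfolding W_def by auto
  then show "(\<lambda>t. (deriv S t)^2) integrable_on {0..1}"
    using integrable[rule_format, of 1] assms(2) by simp
  have "L2_norm2 ((deriv ^^ 1) S) \<le> (\<Sum>j=0..k. L2_norm2 ((deriv ^^ j) S))"
    using assms(2) integrable
    by (intro member_le_sum) (auto simp: L2_norm2_def intro: integral_nonneg)
  also have "\<dots> \<le> r"
    using assms unfolding W_def by auto
  finally show "L2_norm2 (deriv S) \<le> r"
    by simp
qed

lemma integral_grid_cell_le:
  fixes S f :: "real \<Rightarrow> real"
  assumes j: "j \<in> {1..n}" and "0 < \<delta>" "\<delta> < 1"
    and S': "\<And>s. (S has_real_derivative f s) (at s)"
    and f2: "(\<lambda>s. (f s)^2) integrable_on {0..1}"
  shows "(1 - \<delta>) * integral {real (j - 1) / real n..real j / real n} (\<lambda>t. (w - S t)^2)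
    \<le> (w - S (real j / real n))^2 / real n
       + (1/\<delta> - 1) * integral {real (j - 1) / real n..real j / real n} (\<lambda>s. (f s)^2) / (real n)^2"
    (is "_ \<le> ?bound")
proof -
  let ?u = "real (j - 1) / real n" and ?v = "real j / real n"
  have "(1 - \<delta>) * integral {?u..?v} (\<lambda>t. (w - S t)^2)
      \<le> (?v - ?u) * (w - S ?v)^2 + (1/\<delta> - 1) * (?v - ?u)^2 * integral {?u..?v} (\<lambda>s. (f s)^2)"
    using grid_cell[OF j] assms(2,3)
    by (intro integral_cell_le has_field_derivative_at_within[OF S'] integrable_on_subinterval[OF f2])
  also have "\<dots> = ?bound"
    by (simp only: grid_cell(3)[OF j]) (simp add: power_divide)
  finally show ?thesis .
qed

theorem lemma8p1:
  fixes k n :: nat and r \<delta> :: real and S Sh :: "real \<Rightarrow> real"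
  assumes "k \<ge> 1" and "r > 0" and "n \<ge> 1"
    and "0 < \<delta>" and "\<delta> < 1"
    and "S \<in> W r k"
  shows "emp_norm2 n (\<lambda>x. Sh x - S x)
           \<ge> (1 - \<delta>) * L2_norm2 (\<lambda>x. T_n n Sh x - S x) - (1 / \<delta> - 1) * r / (real n)^2"
proof -
  let ?x = "\<lambda>j. real j / real n"
  note S' = W_first_derivative[OF assms(6,1)]
  have "continuous_on {0..1} S"
    by (rule DERIV_continuous_on, rule has_field_derivative_at_within[OF S'(1)])
  then have "(1 - \<delta>) * L2_norm2 (\<lambda>x. T_n n Sh x - S x)
      = (\<Sum>j=1..n. (1 - \<delta>) * integral {?x (j - 1)..?x j} (\<lambda>t. (Sh (?x j) - S t)^2))"
    by (simp only: L2_norm2_T_n_diff[OF assms(3)] sum_distrib_left)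
  also have "\<dots> \<le> (\<Sum>j=1..n. (Sh (?x j) - S (?x j))^2 / real n
      + (1/\<delta> - 1) * integral {?x (j - 1)..?x j} (\<lambda>t. (deriv S t)^2) / (real n)^2)"
    using assms(4,5) S' by (intro sum_mono integral_grid_cell_le)
  also have "\<dots> = (\<Sum>j=1..n. (Sh (?x j) - S (?x j))^2) / real n
      + (1/\<delta> - 1) * (\<Sum>j=1..n. integral {?x (j - 1)..?x j} (\<lambda>t. (deriv S t)^2)) / (real n)^2"
    by (simp add: sum.distrib sum_divide_distrib sum_distrib_left)
  also have "\<dots> = emp_norm2 n (\<lambda>x. Sh x - S x) + (1/\<delta> - 1) * L2_norm2 (deriv S) / (real n)^2"
    unfolding L2_norm2_def integral_sum_grid_cells[OF assms(3) S'(2)]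
    by (simp add: emp_norm2_def)
  also have "\<dots> \<le> emp_norm2 n (\<lambda>x. Sh x - S x) + (1/\<delta> - 1) * r / (real n)^2"
    using S'(3) assms(4,5) by (intro add_left_mono divide_right_mono mult_left_mono) auto
  finally show ?thesis
    by simp
qed

end
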